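(* For each $n \in \mathbb N$ and $q \in \{0,1,\dots,n-1\}$, $$\sum_{\mathbf m \in S_{n,q}} \pi_{\mathbf m} = \sum_{\substack{\mathbf k=(k_1,\dots,k_n)\in\{0,1,2,\dots\}^n\\ \sum_{j=1}^n j k_j = n,\ \sum_{j=1}^n k_j = n-q}} \frac{1}{k_1!\,k_2!\cdots k_n!\; 2^{k_2}\,3^{k_3}\cdots n^{k_n}}.$$
   Context: $S_{n,q} = \{\mathbf m=(m_1,\dots,m_{n-q}) \in \{0,1,2,\dots\}^{n-q} : m_1+\cdots+m_{n-q}=q\}$, and for $\mathbf m\in S_{n,q}$, $\pi_{\mathbf m} = \prod_{i=1}^{n-q}[m_i+m_{i+1}+\cdots+m_{n-q} + (n-q-i+1)]^{-1}$. *)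

theory Defs
  imports Complex_Main
begin

text \<open>Tuples (m_1,...,m_N) of nonnegative integers are encoded as functions
  nat => nat that vanish outside the index range {1..N}.\<close>

definition S_set :: "nat \<Rightarrow> nat \<Rightarrow> (nat \<Rightarrow> nat) set" where
  "S_set n q = {m. (\<forall>i. i \<notin> {1..n-q} \<longrightarrow> m i = 0) \<and> (\<Sum>i=1..n-q. m i) = q}"

definition pi_m :: "nat \<Rightarrow> nat \<Rightarrow> (nat \<Rightarrow> nat) \<Rightarrow> real" where
  "pi_m n q m = (\<Prod>i=1..n-q. 1 / real ((\<Sum>j=i..n-q. m j) + (n - q - i + 1)))"

definition K_set :: "nat \<Rightarrow> nat \<Rightarrow> (nat \<Rightarrow> nat) set" where
  "K_set n q = {k. (\<forall>j. j \<notin> {1..n} \<longrightarrow> k j = 0) \<and>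
      (\<Sum>j=1..n. j * k j) = n \<and> (\<Sum>j=1..n. k j) = n - q}"

end

theory Submission
  imports Defs
begin

text \<open>The right-hand side is a normalised count of permutations: \<open>1 / \<Prod>j. k\<^sub>j! j^k\<^sub>j\<close> is
  the proportion of permutations of \<open>n\<close> points with \<open>k\<^sub>j\<close> cycles of length \<open>j\<close>, so the sum over
  cycle types with \<open>n - q\<close> cycles is \<open>c(n, n - q) / n!\<close>. Write \<open>B(n, N)\<close> for this sum and
  \<open>A(N, s)\<close> for the left-hand side with \<open>N = n - q\<close> parts summing to \<open>s = q\<close>. Since
  \<open>n = \<Sum>j. j k\<^sub>j\<close>, removing one \<open>j\<close>-cycle gives \<open>n B(n, N + 1) = \<Sum>j. B(n - j, N)\<close>;
  splitting off the first part \<open>a\<close> of a composition, whose factor in \<open>\<pi>\<^sub>m\<close> is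
  \<open>1 / (s + N + 1)\<close>, gives \<open>(s + N + 1) A(N + 1, s) = \<Sum>a. A(N, s - a)\<close>. As \<open>B(m, N) = 0\<close>
  for \<open>m < N\<close>, both recursions coincide and induction on \<open>N\<close> gives \<open>A(N, s) = B(s + N, N)\<close>.\<close>

lemma finite_bounded_funs_supported_on:
  assumes "finite I"
  shows "finite {f :: 'a \<Rightarrow> nat. (\<forall>i. i \<notin> I \<longrightarrow> f i = 0) \<and> (\<forall>i. f i \<le> b)}"
proof -
  have "finite {f :: 'a \<Rightarrow> nat. \<forall>x. (x \<in> I \<longrightarrow> f x \<in> {0..b}) \<and> (x \<notin> I \<longrightarrow> f x = 0)}"
    using assms by (intro finite_set_of_finite_funs) auto
  then show ?thesis by (rule finite_subset[rotated]) auto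
qed

lemma sum_fun_upd_add:
  fixes g :: "'a \<Rightarrow> 'b \<Rightarrow> 'c::comm_monoid_add"
  assumes "finite I" "j \<in> I"
  shows "(\<Sum>i\<in>I. g i ((k(j := v)) i)) + g j (k j) = (\<Sum>i\<in>I. g i (k i)) + g j v"
proof -
  have "(\<Sum>i\<in>I-{j}. g i ((k(j := v)) i)) = (\<Sum>i\<in>I-{j}. g i (k i))"
    by (rule sum.cong) auto
  then show ?thesis
    by (simp add: sum.remove[OF assms] add_ac)
qed

subsection \<open>Cycle types\<close>

definition cycle_types :: "nat \<Rightarrow> nat \<Rightarrow> (nat \<Rightarrow> nat) set" where
  "cycle_types n N = {k. (\<forall>j. j \<notin> {1..n} \<longrightarrow> k j = 0) \<and>
      (\<Sum>j=1..n. j * k j) = n \<and> (\<Sum>j=1..n. k j) = N}"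

definition cycle_type_weight :: "nat \<Rightarrow> (nat \<Rightarrow> nat) \<Rightarrow> real" where
  "cycle_type_weight n k = 1 / (\<Prod>j=1..n. fact (k j) * real j ^ k j)"

definition cycle_type_sum :: "nat \<Rightarrow> nat \<Rightarrow> real" where
  "cycle_type_sum n N = (\<Sum>k\<in>cycle_types n N. cycle_type_weight n k)"

lemma cycle_type_index_le:
  fixes k :: "nat \<Rightarrow> nat"
  assumes "(\<Sum>i=1..M. i * k i) = n" "i \<in> {1..M}" "k i \<noteq> 0"
  shows "i \<le> n"
proof -
  have "i \<le> i * k i" using assms(3) by (cases "k i") auto
  also have "\<dots> \<le> (\<Sum>i=1..M. i * k i)" using assms(2) by (intro member_le_sum) auto
  finally show ?thesis using assms(1) by simp
qed

lemma mem_cycle_types_iff: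
  assumes "n \<le> M"
  shows "k \<in> cycle_types n N \<longleftrightarrow>
    (\<forall>i. i \<notin> {1..M} \<longrightarrow> k i = 0) \<and> (\<Sum>i=1..M. i * k i) = n \<and> (\<Sum>i=1..M. k i) = N"
proof
  assume k: "k \<in> cycle_types n N"
  then have supp: "\<forall>i. i \<notin> {1..n} \<longrightarrow> k i = 0" by (simp add: cycle_types_def)
  have "(\<Sum>i=1..M. f i (k i)) = (\<Sum>i=1..n. f i (k i))" if "\<And>i. f i 0 = 0"
    for f :: "nat \<Rightarrow> nat \<Rightarrow> nat"
    by (rule sum.mono_neutral_right) (use assms supp that in auto)
  from this[of "\<lambda>i v. i * v"] this[of "\<lambda>i v. v"] show "(\<forall>i. i \<notin> {1..M} \<longrightarrow> k i = 0) \<and>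
      (\<Sum>i=1..M. i * k i) = n \<and> (\<Sum>i=1..M. k i) = N"
    using k assms by (auto simp: cycle_types_def)
next
  assume k: "(\<forall>i. i \<notin> {1..M} \<longrightarrow> k i = 0) \<and> (\<Sum>i=1..M. i * k i) = n \<and> (\<Sum>i=1..M. k i) = N"
  have supp: "\<forall>i. i \<notin> {1..n} \<longrightarrow> k i = 0"
  proof (intro allI impI)
    fix i assume "i \<notin> {1..n}"
    then show "k i = 0"
      using k cycle_type_index_le[where M = M and k = k and i = i] by (cases "i = 0") auto
  qed
  have "(\<Sum>i=1..M. f i (k i)) = (\<Sum>i=1..n. f i (k i))" if "\<And>i. f i 0 = 0"
    for f :: "nat \<Rightarrow> nat \<Rightarrow> nat"
    by (rule sum.mono_neutral_right) (use assms supp that in auto)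
  from this[of "\<lambda>i v. i * v"] this[of "\<lambda>i v. v"] show "k \<in> cycle_types n N"
    using k supp by (simp add: cycle_types_def)
qed

lemma finite_cycle_types: "finite (cycle_types n N)"
proof (rule finite_subset[OF _ finite_bounded_funs_supported_on])
  show "cycle_types n N \<subseteq> {k. (\<forall>i. i \<notin> {1..n} \<longrightarrow> k i = 0) \<and> (\<forall>i. k i \<le> n)}"
  proof safe
    fix k i assume k: "k \<in> cycle_types n N"
    show "k i \<le> n"
    proof (cases "i \<in> {1..n}")
      case True
      then have "k i \<le> i * k i" by simp
      also have "\<dots> \<le> (\<Sum>j=1..n. j * k j)" using True by (intro member_le_sum) auto
      finally show ?thesis using k by (simp add: cycle_types_def)
    qed (use k in \<open>simp add: cycle_types_def\<close>)
  qed (simp add: cycle_types_def)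
qed simp

lemma cycle_types_below: "n < N \<Longrightarrow> cycle_types n N = {}"
proof (rule ccontr)
  assume "n < N" "cycle_types n N \<noteq> {}"
  then obtain k where k: "k \<in> cycle_types n N" by auto
  have "(\<Sum>i=1..n. k i) \<le> (\<Sum>i=1..n. i * k i)" by (rule sum_mono) auto
  with k \<open>n < N\<close> show False by (simp add: cycle_types_def)
qed

lemma cycle_types_add_cycle:
  assumes j: "j \<in> {1..n}" and k: "k \<in> cycle_types (n - j) N"
  shows "k(j := Suc (k j)) \<in> cycle_types n (Suc N)"
proof -
  have k': "(\<forall>i. i \<notin> {1..n} \<longrightarrow> k i = 0) \<and> (\<Sum>i=1..n. i * k i) = n - j \<and> (\<Sum>i=1..n. k i) = N"
    using k mem_cycle_types_iff[of "n - j" n] by simp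
  have "(\<Sum>i=1..n. i * (k(j := Suc (k j))) i) + j * k j = (\<Sum>i=1..n. i * k i) + j * Suc (k j)"
    using sum_fun_upd_add[OF _ j, of "\<lambda>i v. i * v" k] by simp
  moreover have "(\<Sum>i=1..n. (k(j := Suc (k j))) i) + k j = (\<Sum>i=1..n. k i) + Suc (k j)"
    using sum_fun_upd_add[OF _ j, of "\<lambda>i v. v" k] by simp
  ultimately show ?thesis
    using k' j by (auto simp: cycle_types_def)
qed

lemma cycle_types_remove_cycle:
  assumes j: "j \<in> {1..n}" and k: "k \<in> cycle_types n (Suc N)" and kj: "k j \<noteq> 0"
  shows "k(j := k j - 1) \<in> cycle_types (n - j) N"
proof -
  have k': "(\<forall>i. i \<notin> {1..n} \<longrightarrow> k i = 0) \<and> (\<Sum>i=1..n. i * k i) = n \<and> (\<Sum>i=1..n. k i) = Suc N"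
    using k by (simp add: cycle_types_def)
  have "(\<Sum>i=1..n. i * (k(j := k j - 1)) i) + j * k j = (\<Sum>i=1..n. i * k i) + j * (k j - 1)"
    using sum_fun_upd_add[OF _ j, of "\<lambda>i v. i * v" k] by simp
  moreover have "j * k j = j * (k j - 1) + j" using kj by (cases "k j") auto
  moreover have "(\<Sum>i=1..n. (k(j := k j - 1)) i) + k j = (\<Sum>i=1..n. k i) + (k j - 1)"
    using sum_fun_upd_add[OF _ j, of "\<lambda>i v. v" k] by simp
  ultimately show ?thesis
    using k' kj j mem_cycle_types_iff[of "n - j" n] by auto
qed

lemma cycle_type_weight_supported:
  assumes "m \<le> n" "\<forall>i. i \<notin> {1..m} \<longrightarrow> k i = 0"
  shows "cycle_type_weight n k = cycle_type_weight m k"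
  unfolding cycle_type_weight_def
  by (rule arg_cong[where f = "\<lambda>x. 1 / x"], rule prod.mono_neutral_right) (use assms in auto)

lemma cycle_type_weight_fun_upd:
  assumes j: "j \<in> {1..n}" and kj: "k j = Suc t"
  shows "cycle_type_weight n (k(j := t)) = real j * real (Suc t) * cycle_type_weight n k"
proof -
  define g where "g k i = fact (k i) * real i ^ k i" for k :: "nat \<Rightarrow> nat" and i
  define R where "R = (\<Prod>i\<in>{1..n}-{j}. g k i)"
  have weight_eq: "cycle_type_weight n k' = 1 / (\<Prod>i=1..n. g k' i)" for k'
    by (simp add: cycle_type_weight_def g_def)
  have "(\<Prod>i\<in>{1..n}-{j}. g (k(j := t)) i) = R"
    unfolding R_def by (rule prod.cong) (auto simp: g_def)
  then have "(\<Prod>i=1..n. g (k(j := t)) i) = g (k(j := t)) j * R"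
    using prod.remove[OF _ j, of "g (k(j := t))"] by simp
  moreover have "(\<Prod>i=1..n. g k i) = real j * real (Suc t) * g (k(j := t)) j * R"
    using prod.remove[OF _ j, of "g k"] kj by (simp add: R_def g_def algebra_simps)
  moreover have "R \<noteq> 0" "g (k(j := t)) j \<noteq> 0"
    using j by (auto simp: R_def g_def)
  ultimately show ?thesis
    unfolding weight_eq using j by simp
qed

lemma cycle_type_sum_mult_count:
  assumes j: "j \<in> {1..n}"
  shows "(\<Sum>k\<in>cycle_types n (Suc N). real j * real (k j) * cycle_type_weight n k)
    = cycle_type_sum (n - j) N"
proof -
  let ?K = "cycle_types n (Suc N)"
  have "(\<Sum>k\<in>?K. real j * real (k j) * cycle_type_weight n k)
      = (\<Sum>k\<in>{k\<in>?K. k j \<noteq> 0}. real j * real (k j) * cycle_type_weight n k)"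
    by (rule sum.mono_neutral_right) (auto simp: finite_cycle_types)
  also have "\<dots> = (\<Sum>k\<in>cycle_types (n - j) N. cycle_type_weight n k)"
  proof (rule sum.reindex_bij_witness[where i = "\<lambda>k. k(j := Suc (k j))" and j = "\<lambda>k. k(j := k j - 1)"])
    fix k assume "k \<in> {k\<in>?K. k j \<noteq> 0}"
    then show "k(j := k j - 1) \<in> cycle_types (n - j) N"
      and "(k(j := k j - 1))(j := Suc ((k(j := k j - 1)) j)) = k"
      and "cycle_type_weight n (k(j := k j - 1)) = real j * real (k j) * cycle_type_weight n k"
      using cycle_types_remove_cycle[OF j] cycle_type_weight_fun_upd[OF j, of k "k j - 1"]
      by auto
  next
    fix k assume "k \<in> cycle_types (n - j) N"
    then show "k(j := Suc (k j)) \<in> {k\<in>?K. k j \<noteq> 0}"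
      and "(k(j := Suc (k j)))(j := (k(j := Suc (k j))) j - 1) = k"
      using cycle_types_add_cycle[OF j] by auto
  qed
  also have "\<dots> = cycle_type_sum (n - j) N"
    unfolding cycle_type_sum_def
    by (rule sum.cong[OF refl], rule cycle_type_weight_supported) (auto simp: cycle_types_def)
  finally show ?thesis .
qed

lemma cycle_type_sum_rec:
  "real n * cycle_type_sum n (Suc N) = (\<Sum>j=1..n. cycle_type_sum (n - j) N)"
proof -
  let ?K = "cycle_types n (Suc N)"
  have "real n * cycle_type_sum n (Suc N)
      = (\<Sum>k\<in>?K. \<Sum>j=1..n. real j * real (k j) * cycle_type_weight n k)"
    unfolding cycle_type_sum_def sum_distrib_left
  proof (rule sum.cong[OF refl])
    fix k assume "k \<in> ?K"
    then have "real n = (\<Sum>j=1..n. real j * real (k j))"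
      unfolding cycle_types_def by (simp flip: of_nat_mult of_nat_sum)
    then show "real n * cycle_type_weight n k = (\<Sum>j=1..n. real j * real (k j) * cycle_type_weight n k)"
      by (simp add: sum_distrib_right)
  qed
  also have "\<dots> = (\<Sum>j=1..n. \<Sum>k\<in>?K. real j * real (k j) * cycle_type_weight n k)"
    by (rule sum.swap)
  also have "\<dots> = (\<Sum>j=1..n. cycle_type_sum (n - j) N)"
    by (rule sum.cong[OF refl]) (rule cycle_type_sum_mult_count)
  finally show ?thesis .
qed

lemma cycle_type_sum_0: "cycle_type_sum n 0 = (if n = 0 then 1 else 0)"
proof -
  have "cycle_types n 0 = (if n = 0 then {\<lambda>_. 0} else {})"
    by (auto simp: cycle_types_def fun_eq_iff)
  then show ?thesis by (simp add: cycle_type_sum_def cycle_type_weight_def)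
qed

subsection \<open>Compositions\<close>

definition compositions :: "nat \<Rightarrow> nat \<Rightarrow> (nat \<Rightarrow> nat) set" where
  "compositions N s = {m. (\<forall>i. i \<notin> {1..N} \<longrightarrow> m i = 0) \<and> (\<Sum>i=1..N. m i) = s}"

definition composition_weight :: "nat \<Rightarrow> (nat \<Rightarrow> nat) \<Rightarrow> real" where
  "composition_weight N m = (\<Prod>i=1..N. 1 / real ((\<Sum>j=i..N. m j) + (N - i + 1)))"

definition composition_sum :: "nat \<Rightarrow> nat \<Rightarrow> real" where
  "composition_sum N s = (\<Sum>m\<in>compositions N s. composition_weight N m)"

lemma finite_compositions: "finite (compositions N s)"
proof (rule finite_subset[OF _ finite_bounded_funs_supported_on])
  show "compositions N s \<subseteq> {m. (\<forall>i. i \<notin> {1..N} \<longrightarrow> m i = 0) \<and> (\<forall>i. m i \<le> s)}"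
  proof safe
    fix m i assume m: "m \<in> compositions N s"
    show "m i \<le> s"
    proof (cases "i \<in> {1..N}")
      case True
      then have "m i \<le> (\<Sum>i=1..N. m i)" by (intro member_le_sum) auto
      with m show ?thesis by (simp add: compositions_def)
    qed (use m in \<open>simp add: compositions_def\<close>)
  qed (simp add: compositions_def)
qed simp

text \<open>Parts are indexed from 1. Index 0 carries junk (\<open>comp_cons a m 0 = m 0\<close>), hence the
  hypotheses \<open>m 0 = 0\<close> below, which hold on \<^const>\<open>compositions\<close>.\<close>

definition comp_cons :: "nat \<Rightarrow> (nat \<Rightarrow> nat) \<Rightarrow> nat \<Rightarrow> nat" where
  "comp_cons a m i = (if i = 1 then a else m (i - 1))"

definition comp_tail :: "(nat \<Rightarrow> nat) \<Rightarrow> nat \<Rightarrow> nat" where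
  "comp_tail m i = (if i = 0 then 0 else m (Suc i))"

lemma comp_tail_comp_cons: "m 0 = 0 \<Longrightarrow> comp_tail (comp_cons a m) = m"
  by (auto simp: comp_tail_def comp_cons_def fun_eq_iff)

lemma comp_cons_comp_tail: "m 0 = 0 \<Longrightarrow> comp_cons (m 1) (comp_tail m) = m"
proof
  fix i assume "m 0 = 0"
  then show "comp_cons (m 1) (comp_tail m) i = m i"
    by (cases i) (auto simp: comp_tail_def comp_cons_def)
qed

lemma sum_comp_cons_from_Suc:
  assumes "1 \<le> i"
  shows "(\<Sum>j=Suc i..Suc N. comp_cons a m j) = (\<Sum>j=i..N. m j)"
  unfolding sum.shift_bounds_cl_Suc_ivl using assms by (intro sum.cong) (auto simp: comp_cons_def)

lemma sum_comp_cons: "(\<Sum>j=1..Suc N. comp_cons a m j) = a + (\<Sum>j=1..N. m j)"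
proof -
  have "(\<Sum>j=1..Suc N. comp_cons a m j) = comp_cons a m 1 + (\<Sum>j=Suc 1..Suc N. comp_cons a m j)"
    by (rule sum.atLeast_Suc_atMost) simp
  then show ?thesis by (simp only: sum_comp_cons_from_Suc[OF order_refl]) (simp add: comp_cons_def)
qed

lemma comp_cons_in_compositions:
  assumes m: "m \<in> compositions N s"
  shows "comp_cons a m \<in> compositions (Suc N) (a + s)"
proof -
  have supp: "\<forall>i. i \<notin> {1..N} \<longrightarrow> m i = 0" using m by (simp add: compositions_def)
  have "comp_cons a m i = 0" if "i \<notin> {1..Suc N}" for i
  proof -
    have "i \<noteq> 1" "i - 1 \<notin> {1..N}" using that by auto
    with supp show ?thesis by (simp add: comp_cons_def)
  qed
  with m show ?thesis unfolding compositions_def mem_Collect_eq sum_comp_cons by simp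
qed

lemma comp_tail_in_compositions:
  assumes m: "m \<in> compositions (Suc N) s"
  shows "m 1 \<le> s" "comp_tail m \<in> compositions N (s - m 1)"
proof -
  have "m 0 = 0" using m by (simp add: compositions_def)
  then have "(\<Sum>j=1..Suc N. m j) = m 1 + (\<Sum>j=1..N. comp_tail m j)"
    using sum_comp_cons[where a = "m 1" and m = "comp_tail m"] comp_cons_comp_tail by metis
  with m show "m 1 \<le> s" "comp_tail m \<in> compositions N (s - m 1)"
    by (auto simp: compositions_def comp_tail_def)
qed

lemma composition_weight_comp_cons:
  "composition_weight (Suc N) (comp_cons a m)
    = composition_weight N m / real (a + (\<Sum>j=1..N. m j) + Suc N)"
proof -
  let ?f = "\<lambda>i. 1 / real ((\<Sum>j=i..Suc N. comp_cons a m j) + (Suc N - i + 1))"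
  have "composition_weight (Suc N) (comp_cons a m) = ?f 1 * (\<Prod>i=Suc 1..Suc N. ?f i)"
    unfolding composition_weight_def by (rule prod.atLeast_Suc_atMost) simp
  also have "(\<Prod>i=Suc 1..Suc N. ?f i) = composition_weight N m"
    unfolding prod.shift_bounds_cl_Suc_ivl composition_weight_def
    by (intro prod.cong refl, subst sum_comp_cons_from_Suc) auto
  finally show ?thesis unfolding sum_comp_cons by simp
qed

lemma composition_sum_rec:
  "real (s + Suc N) * composition_sum (Suc N) s = (\<Sum>a=0..s. composition_sum N (s - a))"
proof -
  let ?T = "Sigma {0..s} (\<lambda>a. compositions N (s - a))"
  have "composition_sum (Suc N) s = (\<Sum>(a, m)\<in>?T. composition_weight (Suc N) (comp_cons a m))"
    unfolding composition_sum_def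
  proof (rule sum.reindex_bij_witness[where j = "\<lambda>m. (m 1, comp_tail m)"
        and i = "\<lambda>(a, m). comp_cons a m"])
    fix m assume m: "m \<in> compositions (Suc N) s"
    then have "m 0 = 0" by (simp add: compositions_def)
    then show "(case (m 1, comp_tail m) of (a, m) \<Rightarrow> comp_cons a m) = m"
      "(case (m 1, comp_tail m) of (a, m) \<Rightarrow> composition_weight (Suc N) (comp_cons a m))
        = composition_weight (Suc N) m"
      using comp_cons_comp_tail by simp_all
    show "(m 1, comp_tail m) \<in> ?T" using comp_tail_in_compositions[OF m] by auto
  next
    fix am assume "am \<in> ?T"
    then obtain a m where am: "am = (a, m)" "a \<le> s" "m \<in> compositions N (s - a)" by auto
    then have "m 0 = 0" by (simp add: compositions_def)
    with am show "((case am of (a, m) \<Rightarrow> comp_cons a m) 1,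
        comp_tail (case am of (a, m) \<Rightarrow> comp_cons a m)) = am"
      "(case am of (a, m) \<Rightarrow> comp_cons a m) \<in> compositions (Suc N) s"
      using comp_cons_in_compositions[OF am(3), of a]
      by (auto simp: comp_tail_comp_cons comp_cons_def)
  qed
  also have "\<dots> = (\<Sum>a=0..s. \<Sum>m\<in>compositions N (s - a). composition_weight (Suc N) (comp_cons a m))"
    by (rule sum.Sigma[symmetric]) (auto simp: finite_compositions)
  also have "\<dots> = (\<Sum>a=0..s. \<Sum>m\<in>compositions N (s - a). composition_weight N m / real (s + Suc N))"
    by (intro sum.cong refl) (auto simp: composition_weight_comp_cons compositions_def)
  finally show ?thesis
    by (simp add: composition_sum_def sum_divide_distrib[symmetric])
qed

lemma composition_sum_0: "composition_sum 0 s = (if s = 0 then 1 else 0)"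
proof -
  have "compositions 0 s = (if s = 0 then {\<lambda>_. 0} else {})"
    by (auto simp: compositions_def)
  then show ?thesis by (simp add: composition_sum_def composition_weight_def)
qed

lemma composition_sum_eq_cycle_type_sum: "composition_sum N s = cycle_type_sum (s + N) N"
proof (induction N arbitrary: s)
  case 0
  show ?case by (simp add: composition_sum_0 cycle_type_sum_0)
next
  case (Suc N)
  let ?n = "s + Suc N"
  have "real ?n * cycle_type_sum ?n (Suc N) = (\<Sum>j=1..?n. cycle_type_sum (?n - j) N)"
    by (rule cycle_type_sum_rec)
  also have "\<dots> = (\<Sum>j=1..Suc s. cycle_type_sum (?n - j) N)"
    by (rule sum.mono_neutral_right) (auto simp: cycle_type_sum_def cycle_types_below)
  also have "\<dots> = (\<Sum>a=0..s. cycle_type_sum (?n - Suc a) N)"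
    using sum.shift_bounds_cl_Suc_ivl[of "\<lambda>j. cycle_type_sum (?n - j) N" 0 s] by simp
  also have "\<dots> = (\<Sum>a=0..s. cycle_type_sum ((s - a) + N) N)"
    by (intro sum.cong refl) (simp add: Suc_diff_le)
  also have "\<dots> = real ?n * composition_sum (Suc N) s"
    by (simp only: composition_sum_rec Suc.IH)
  finally show ?case by simp
qed

theorem lemma5:
  fixes n q :: nat
  assumes "q < n"
  shows "(\<Sum>m\<in>S_set n q. pi_m n q m) =
         (\<Sum>k\<in>K_set n q. 1 / (\<Prod>j=1..n. fact (k j) * real j ^ k j))"
proof -
  have "S_set n q = compositions (n - q) q" "pi_m n q = composition_weight (n - q)"
    "K_set n q = cycle_types n (n - q)"
    by (simp_all add: S_set_def compositions_def pi_m_def composition_weight_def fun_eq_iff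
        K_set_def cycle_types_def)
  then show ?thesis
    using composition_sum_eq_cycle_type_sum[of "n - q" q] assms
    by (simp add: composition_sum_def cycle_type_sum_def cycle_type_weight_def)
qed

end
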